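(* Let $n\equiv 3\pmod 4$ with $n>3$. Let $1\le r\le m$, let $M_r\in\mathfrak{C}_r$, and suppose $\det\tilde M_r>0$. Let $E_m^*\in\mathfrak{E}_m$ satisfy $\det E_m^*=\max\{\det E: E\in\mathfrak{E}_m\}$, and write $$E_m^*=\begin{bmatrix}M_r & B\\ B^T & A\end{bmatrix}$$ with $A=(a_{ij})$ of order $m-r$. Then for all $i\neq j$, $a_{ij}\in\{-1,3\}$.
   Context: Fix an integer $n\equiv 3\pmod 4$, $n>3$. For $m\ge1$, $\mathfrak{C}_m$ is the set of symmetric positive definite $m\times m$ integer matrices $C=(c_{ij})$ with $c_{ii}=n$ and $c_{ij}\equiv n\pmod 4$ for all $i,j$. Given a fixed $M_r\in\mathfrak{C}_r$, for $m\ge r$, $\mathfrak{E}_m$ is the set of $E_m\in\mathfrak{C}_m$ whose leading $r\times r$ submatrix is $M_r$. For a square matrix $C$ of order $m$, $\tilde C$ denotes the matrix obtained from $C$ by replacing its $(m,m)$ entry by $3$. *)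

theory Defs
  imports "Jordan_Normal_Form.Determinant" "HOL-Number_Theory.Cong"
begin

definition pos_def_real :: "real mat \<Rightarrow> bool" where
  "pos_def_real C \<longleftrightarrow> (\<forall>x \<in> carrier_vec (dim_row C). x \<noteq> 0\<^sub>v (dim_row C) \<longrightarrow> x \<bullet> (C *\<^sub>v x) > 0)"

definition frakC :: "int \<Rightarrow> nat \<Rightarrow> int mat set" where
  "frakC n m = {C. C \<in> carrier_mat m m \<and> C\<^sup>T = C
      \<and> pos_def_real (map_mat real_of_int C)
      \<and> (\<forall>i<m. C $$ (i,i) = n)
      \<and> (\<forall>i<m. \<forall>j<m. [C $$ (i,j) = n] (mod 4))}"

definition lead_sub :: "nat \<Rightarrow> 'a mat \<Rightarrow> 'a mat" where
  "lead_sub r C = mat r r (\<lambda>(i,j). C $$ (i,j))"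

definition frakE :: "int \<Rightarrow> int mat \<Rightarrow> nat \<Rightarrow> int mat set" where
  "frakE n M m = {E \<in> frakC n m. lead_sub (dim_row M) E = M}"

(* C with its (m,m) entry (last diagonal, 0-based index m-1) replaced by 3 *)
definition tilde :: "int mat \<Rightarrow> int mat" where
  "tilde C = mat (dim_row C) (dim_col C)
     (\<lambda>(i,j). if i = dim_row C - 1 \<and> j = dim_col C - 1 then 3 else C $$ (i,j))"

end

theory Submission
  imports Defs
begin

text \<open>
  Let \<open>E\<close> be a maximiser of order \<open>k + 2\<close>, \<open>D\<close> its leading block of order \<open>k\<close>, and let \<open>E(y)\<close>
  be \<open>E\<close> with the symmetric pair of entries at \<open>(k, k+1)\<close> replaced by \<open>y\<close>. Schur complements
  with respect to \<open>D\<close> (a Desnanot--Jacobi identity) give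
  \<open>det E(y) \<cdot> det D = A B - (det D \<cdot> y - c)\<^sup>2\<close>, where \<open>A\<close>, \<open>B\<close> are the two principal minors of
  order \<open>k + 1\<close> containing \<open>D\<close>. So \<open>det E(y)\<close> is a concave parabola in \<open>y\<close>, and maximality of
  \<open>E\<close> says that its entry \<open>x\<close> is the admissible \<open>y \<equiv> 3 (mod 4)\<close> closest to the vertex
  \<open>c / det D\<close>.

  Duplicating the last index of a matrix \<open>H\<close> (joining the twins by the entry 3) is again
  admissible and has determinant \<open>(n - 3)(2 det H - (n - 3) det H')\<close>, \<open>H'\<close> the leading block of
  \<open>H\<close>. Starting from \<open>det (tilde M) > 0\<close>, induction on the order shows that maximal determinants
  grow by more than the factor \<open>n - 3\<close>; applied to \<open>A\<close> and \<open>B\<close> this yields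
  \<open>det E > (n - 3)\<^sup>2 det D\<close>. Positive definiteness forbids \<open>y = \<plusminus>n\<close>, which places the vertex in
  \<open>(-3, 3)\<close>; hence \<open>x \<in> {-1, 3}\<close>. Any off-diagonal pair of the trailing block is moved to
  \<open>(k, k+1)\<close> by a permutation fixing the first \<open>r\<close> indices.
\<close>

section \<open>Block determinants and bordered matrices\<close>

lemma lead_sub_carrier [simp]: "lead_sub k A \<in> carrier_mat k k"
  and lead_sub_dim [simp]: "dim_row (lead_sub k A) = k" "dim_col (lead_sub k A) = k"
  and lead_sub_index [simp]: "i < k \<Longrightarrow> j < k \<Longrightarrow> lead_sub k A $$ (i,j) = A $$ (i,j)"
  unfolding lead_sub_def by auto

lemma lead_sub_lead_sub: "k \<le> l \<Longrightarrow> lead_sub k (lead_sub l A) = lead_sub k A"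
  by (rule eq_matI) auto

lemma lead_sub_self: "A \<in> carrier_mat k k \<Longrightarrow> lead_sub k A = A"
  by (rule eq_matI) auto

lemma transpose_lead_sub:
  "k \<le> dim_row A \<Longrightarrow> k \<le> dim_col A \<Longrightarrow> (lead_sub k A)\<^sup>T = lead_sub k A\<^sup>T"
  by (rule eq_matI) auto

lemma det_four_block_mat_adj:
  fixes D :: "'a::idom mat"
  assumes D: "D \<in> carrier_mat k k" and B: "B \<in> carrier_mat k l"
    and C: "C \<in> carrier_mat l k" and G: "G \<in> carrier_mat l l"
  shows "det (four_block_mat D B C G) * det D ^ l
         = det D * det (det D \<cdot>\<^sub>m G - C * adj_mat D * B)"
proof -
  define g where "g = det D"
  define A where "A = adj_mat D"
  define S where "S = g \<cdot>\<^sub>m G - C * A * B"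
  have A: "A \<in> carrier_mat k k" and DA: "D * A = g \<cdot>\<^sub>m 1\<^sub>m k"
    using adj_mat[OF D] unfolding A_def g_def by auto
  have AB: "A * B \<in> carrier_mat k l" and S: "S \<in> carrier_mat l l"
    unfolding S_def using A B C G by auto
  define E where "E = four_block_mat D B C G"
  define R where "R = four_block_mat (1\<^sub>m k) (0\<^sub>m k l) (0\<^sub>m l k) (g \<cdot>\<^sub>m 1\<^sub>m l)"
  define L where "L = four_block_mat D (0\<^sub>m k l) C (1\<^sub>m l)"
  define U where "U = four_block_mat (1\<^sub>m k) (A * B) (0\<^sub>m l k) S"
  have "E * R = four_block_mat D (g \<cdot>\<^sub>m B) C (g \<cdot>\<^sub>m G)"
    unfolding E_def R_def mult_four_block_mat[OF D B C G one_carrier_mat zero_carrier_mat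
        zero_carrier_mat smult_carrier_mat[OF one_carrier_mat]]
    using D B C G by (simp add: mult_smult_distrib[OF B one_carrier_mat]
        mult_smult_distrib[OF G one_carrier_mat])
  also have "\<dots> = L * U"
  proof -
    have "D * (A * B) = g \<cdot>\<^sub>m B"
      using D A B DA by (simp add: assoc_mult_mat[symmetric] mult_smult_assoc_mat[of _ k k])
    then have UR: "D * (A * B) + 0\<^sub>m k l * S = g \<cdot>\<^sub>m B" using S B by simp
    have LR: "C * (A * B) + 1\<^sub>m l * S = g \<cdot>\<^sub>m G"
    proof -
      have "C * (A * B) = C * A * B" using C A B by (simp add: assoc_mult_mat)
      moreover have "X + (g \<cdot>\<^sub>m G - X) = g \<cdot>\<^sub>m G" if "X \<in> carrier_mat l l" for X
        using that G by (intro eq_matI) auto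
      ultimately show ?thesis unfolding S_def using C A B G S by (simp add: S_def)
    qed
    have UL: "D * 1\<^sub>m k + 0\<^sub>m k l * 0\<^sub>m l k = D" and LL: "C * 1\<^sub>m k + 1\<^sub>m l * 0\<^sub>m l k = C"
      using D C by simp_all
    show ?thesis
      unfolding L_def U_def mult_four_block_mat[OF D zero_carrier_mat C one_carrier_mat
            one_carrier_mat AB zero_carrier_mat S] UL UR LL LR ..
  qed
  finally have "det E * det R = det L * det U"
    using det_mult[of E "k + l" R] det_mult[of L "k + l" U] D B C G AB S
    unfolding E_def R_def L_def U_def by fastforce
  moreover have "det R = g ^ l" unfolding R_def
    by (subst det_four_block_mat_upper_right_zero[OF _ refl]) (auto simp: det_smult)
  moreover have "det L = g" unfolding L_def g_def
    by (subst det_four_block_mat_upper_right_zero[OF D refl C]) auto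
  moreover have "det U = det S" unfolding U_def
    by (subst det_four_block_mat_lower_left_zero[OF _ _ refl S]) (use A B in auto)
  ultimately show ?thesis unfolding E_def S_def A_def g_def by simp
qed

lemma index_mult_mult_mat:
  assumes "C \<in> carrier_mat l k" "A \<in> carrier_mat k k" "B \<in> carrier_mat k l'"
    and "i < l" "j < l'"
  shows "(C * A * B) $$ (i,j) = row C i \<bullet> (A *\<^sub>v col B j)"
  using assms by (simp add: assoc_mult_mat[of C l k A k B l'] mult_mat_vec_def)

lemma det_2x2:
  assumes A: "(A :: 'a :: comm_ring_1 mat) \<in> carrier_mat 2 2"
  shows "det A = A $$ (0,0) * A $$ (1,1) - A $$ (0,1) * A $$ (1,0)"
proof -
  have "det A = A $$ (0,0) * cofactor A 0 0 + A $$ (0,1) * cofactor A 0 1"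
    using laplace_expansion_row[OF A, of 0] by (simp add: numeral_2_eq_2)
  moreover have "cofactor A 0 0 = A $$ (1,1)" "cofactor A 0 1 = - A $$ (1,0)"
    unfolding cofactor_def using A by (auto simp: det_single mat_delete_def)
  ultimately show ?thesis by simp
qed

lemma transpose_adj_mat:
  assumes "A \<in> carrier_mat k k"
  shows "(adj_mat A)\<^sup>T = adj_mat A\<^sup>T"
proof (rule eq_matI)
  fix i j assume "i < dim_row (adj_mat A\<^sup>T)" "j < dim_col (adj_mat A\<^sup>T)"
  then have ij: "i < k" "j < k" using assms by (auto simp: adj_mat_def)
  have "mat_delete A\<^sup>T j i = (mat_delete A i j)\<^sup>T"
    using assms ij by (auto simp: mat_delete_def intro!: eq_matI)
  then show "(adj_mat A)\<^sup>T $$ (i, j) = adj_mat A\<^sup>T $$ (i, j)"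
    using assms ij det_transpose[OF mat_delete_carrier[OF assms]]
    by (simp add: adj_mat_def cofactor_def add.commute)
qed (use assms in \<open>auto simp: adj_mat_def\<close>)

lemma scalar_prod_adj_mat_commute:
  assumes A: "A \<in> carrier_mat k k" "A\<^sup>T = A" and u: "u \<in> carrier_vec k" and w: "w \<in> carrier_vec k"
  shows "u \<bullet> (adj_mat A *\<^sub>v w) = w \<bullet> (adj_mat A *\<^sub>v u)"
proof -
  have adj: "adj_mat A \<in> carrier_mat k k" using adj_mat(1)[OF A(1)] .
  have "u \<bullet> (adj_mat A *\<^sub>v w) = ((adj_mat A)\<^sup>T *\<^sub>v u) \<bullet> w"
    using transpose_vec_mult_scalar[OF adj w u] by simp
  also have "\<dots> = w \<bullet> (adj_mat A *\<^sub>v u)"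
    using transpose_adj_mat[OF A(1)] A adj u w by (simp add: comm_scalar_prod[of _ k])
  finally show ?thesis .
qed

definition border_mat :: "'a::zero mat \<Rightarrow> 'a vec \<Rightarrow> 'a \<Rightarrow> 'a mat" where
  "border_mat P b d = four_block_mat P (mat (dim_row P) 1 (\<lambda>(i,_). b $ i))
      (mat 1 (dim_row P) (\<lambda>(_,j). b $ j)) (mat 1 1 (\<lambda>_. d))"

lemma border_mat_carrier: "P \<in> carrier_mat k k \<Longrightarrow> border_mat P b d \<in> carrier_mat (Suc k) (Suc k)"
  unfolding border_mat_def by auto

lemma border_mat_index:
  assumes "P \<in> carrier_mat k k" "i < Suc k" "j < Suc k"
  shows "border_mat P b d $$ (i,j) = (if i < k \<and> j < k then P $$ (i,j) else if i < k then b $ i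
     else if j < k then b $ j else d)"
  using assms unfolding border_mat_def by auto

lemma lead_sub_border_mat: "P \<in> carrier_mat k k \<Longrightarrow> lead_sub k (border_mat P b d) = P"
  by (rule eq_matI) (auto simp: border_mat_index)

lemma transpose_border_mat:
  assumes "P \<in> carrier_mat k k"
  shows "(border_mat P b d)\<^sup>T = border_mat P\<^sup>T b d"
proof (rule eq_matI)
  fix i j assume "i < dim_row (border_mat P\<^sup>T b d)" "j < dim_col (border_mat P\<^sup>T b d)"
  then have "i < Suc k" "j < Suc k" using assms by (simp_all add: border_mat_def)
  then show "(border_mat P b d)\<^sup>T $$ (i, j) = border_mat P\<^sup>T b d $$ (i, j)"
    using assms border_mat_carrier[OF assms, of b d] by (simp add: border_mat_index carrier_matD)
qed (use assms in \<open>simp_all add: border_mat_def\<close>)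

lemma lead_sub_Suc_eq_border_mat:
  assumes F: "F \<in> carrier_mat s s" "F\<^sup>T = F" and k: "k < s"
  shows "lead_sub (Suc k) F = border_mat (lead_sub k F) (vec k (\<lambda>i. F $$ (i,k))) (F $$ (k,k))"
proof (rule eq_matI)
  fix i j assume "i < dim_row (border_mat (lead_sub k F) (vec k (\<lambda>i. F $$ (i,k))) (F $$ (k,k)))"
    "j < dim_col (border_mat (lead_sub k F) (vec k (\<lambda>i. F $$ (i,k))) (F $$ (k,k)))"
  then have ij: "i < Suc k" "j < Suc k" by (simp_all add: border_mat_def)
  have "F $$ (k,j) = F $$ (j,k)"
    using F k ij by (metis carrier_matD index_transpose_mat(1) less_Suc_eq_le order_le_less_trans)
  then show "lead_sub (Suc k) F $$ (i, j) = border_mat (lead_sub k F) (vec k (\<lambda>i. F $$ (i,k))) (F $$ (k,k)) $$ (i, j)"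
    using ij by (auto simp: border_mat_index[OF lead_sub_carrier] less_Suc_eq)
qed (simp_all add: border_mat_def)

lemma det_border_mat:
  fixes P :: "'a::idom mat"
  assumes P: "P \<in> carrier_mat k k" and b: "b \<in> carrier_vec k" and g: "det P \<noteq> 0"
  shows "det (border_mat P b d) = det P * d - b \<bullet> (adj_mat P *\<^sub>v b)"
proof -
  let ?B = "mat k 1 (\<lambda>(i,_). b $ i)" and ?C = "mat 1 k (\<lambda>(_,j). b $ j)" and ?G = "mat 1 1 (\<lambda>_. d)"
  have A: "adj_mat P \<in> carrier_mat k k" using adj_mat[OF P] by auto
  have "det (border_mat P b d) * det P = det P * det (det P \<cdot>\<^sub>m ?G - ?C * adj_mat P * ?B)"
    using det_four_block_mat_adj[OF P, of ?B 1 ?C ?G] P unfolding border_mat_def by auto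
  also have "det (det P \<cdot>\<^sub>m ?G - ?C * adj_mat P * ?B) = det P * d - (?C * adj_mat P * ?B) $$ (0,0)"
    using P A by (subst det_single) auto
  also have "(?C * adj_mat P * ?B) $$ (0,0) = b \<bullet> (adj_mat P *\<^sub>v b)"
  proof -
    have "row ?C 0 = b" "col ?B 0 = b" using b by (auto intro!: eq_vecI)
    then show ?thesis using index_mult_mult_mat[OF _ A, of ?C 1 ?B 1 0 0] by simp
  qed
  finally show ?thesis using g by (simp add: mult.commute)
qed

lemma sym_mat_eq_border_mat:
  assumes P: "P \<in> carrier_mat (Suc k) (Suc k)" "P\<^sup>T = P"
  shows "border_mat (lead_sub k P) (vec k (\<lambda>i. P $$ (i,k))) (P $$ (k,k)) = P"
  using lead_sub_Suc_eq_border_mat[OF P, of k] lead_sub_self[OF P(1)] by simp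

lemma det_sym_mat_Suc:
  fixes P :: "'a::idom mat"
  assumes P: "P \<in> carrier_mat (Suc k) (Suc k)" "P\<^sup>T = P" and g: "det (lead_sub k P) \<noteq> 0"
  shows "det P = det (lead_sub k P) * P $$ (k,k)
    - vec k (\<lambda>i. P $$ (i,k)) \<bullet> (adj_mat (lead_sub k P) *\<^sub>v vec k (\<lambda>i. P $$ (i,k)))"
  using det_border_mat[OF lead_sub_carrier _ g, of "vec k (\<lambda>i. P $$ (i,k))" "P $$ (k,k)"]
  unfolding sym_mat_eq_border_mat[OF P] by simp

text \<open>
  A Desnanot--Jacobi identity: the Schur complement of \<open>D\<close> in \<open>F\<close> is the symmetric
  \<open>2 \<times> 2\<close> matrix whose determinant, divided by \<open>det D\<close>, is the right-hand side.
\<close>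

lemma det_sym_mat_Suc_Suc:
  fixes F :: "'a::idom mat"
  assumes F: "F \<in> carrier_mat (Suc (Suc k)) (Suc (Suc k))" "F\<^sup>T = F"
  defines "D \<equiv> lead_sub k F"
    and "u \<equiv> vec k (\<lambda>i. F $$ (i,k))" and "w \<equiv> vec k (\<lambda>i. F $$ (i, Suc k))"
  assumes g: "det D \<noteq> 0"
  shows "det F * det D = (det D * F $$ (k,k) - u \<bullet> (adj_mat D *\<^sub>v u))
          * (det D * F $$ (Suc k, Suc k) - w \<bullet> (adj_mat D *\<^sub>v w))
        - (det D * F $$ (k, Suc k) - u \<bullet> (adj_mat D *\<^sub>v w))\<^sup>2"
proof -
  define B where "B = mat k 2 (\<lambda>(i,j). F $$ (i, k + j))"
  define G where "G = mat 2 2 (\<lambda>(i,j). F $$ (k + i, k + j))"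
  define K where "K = det D \<cdot>\<^sub>m G - B\<^sup>T * adj_mat D * B"
  have Fs: "F $$ (i,j) = F $$ (j,i)" if "i < Suc (Suc k)" "j < Suc (Suc k)" for i j
    using F that by (metis carrier_matD index_transpose_mat(1))
  have D: "D \<in> carrier_mat k k" and A: "adj_mat D \<in> carrier_mat k k"
    and B: "B \<in> carrier_mat k 2" and G: "G \<in> carrier_mat 2 2"
    using adj_mat(1)[OF lead_sub_carrier] unfolding D_def B_def G_def by auto
  have "F = four_block_mat D B B\<^sup>T G"
    using F Fs by (intro eq_matI) (auto simp: D_def B_def G_def)
  then have "det F * det D ^ 2 = det D * det K"
    using det_four_block_mat_adj[OF D B _ G] B unfolding K_def by auto
  moreover have "det K = K $$ (0,0) * K $$ (1,1) - K $$ (0,1) * K $$ (1,0)"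
    using D A B G by (intro det_2x2) (auto simp: K_def)
  moreover have K: "K $$ (i,j) = det D * F $$ (k + i, k + j) - col B i \<bullet> (adj_mat D *\<^sub>v col B j)"
    if "i < 2" "j < 2" for i j
    using that A B G index_mult_mult_mat[of "B\<^sup>T" 2 k "adj_mat D" B 2 i j]
    by (simp add: K_def G_def)
  moreover have "col B 0 = u" "col B 1 = w" by (auto simp: B_def u_def w_def intro!: eq_vecI)
  moreover have "w \<bullet> (adj_mat D *\<^sub>v u) = u \<bullet> (adj_mat D *\<^sub>v w)"
    using D F by (intro scalar_prod_adj_mat_commute)
      (auto simp: D_def u_def w_def transpose_lead_sub carrier_matD)
  moreover have "F $$ (Suc k, k) = F $$ (k, Suc k)" using Fs by simp
  ultimately have "det D * (det F * det D) = det D * ((det D * F $$ (k,k) - u \<bullet> (adj_mat D *\<^sub>v u))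
          * (det D * F $$ (Suc k, Suc k) - w \<bullet> (adj_mat D *\<^sub>v w))
        - (det D * F $$ (k, Suc k) - u \<bullet> (adj_mat D *\<^sub>v w))\<^sup>2)"
    by (simp add: power2_eq_square algebra_simps)
  then show ?thesis using g by simp
qed

lemma det_border_mat_last_pair:
  fixes P :: "'a::idom mat"
  assumes P: "P \<in> carrier_mat (Suc k) (Suc k)" "P\<^sup>T = P" and w: "w \<in> carrier_vec k"
  defines "D \<equiv> lead_sub k P" and "u \<equiv> vec k (\<lambda>i. P $$ (i,k))"
  assumes g: "det D \<noteq> 0"
  shows "det (border_mat P (vec (Suc k) (\<lambda>i. if i = k then y else w $ i)) d) * det D
     = det P * det (border_mat D w d) - (det D * y - u \<bullet> (adj_mat D *\<^sub>v w))\<^sup>2"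
proof -
  define F where "F = border_mat P (vec (Suc k) (\<lambda>i. if i = k then y else w $ i)) d"
  have F: "F \<in> carrier_mat (Suc (Suc k)) (Suc (Suc k))" "F\<^sup>T = F"
    unfolding F_def using P border_mat_carrier[OF P(1)] transpose_border_mat[OF P(1)] by auto
  have "lead_sub k F = D"
    unfolding F_def D_def by (metis lead_sub_lead_sub lead_sub_border_mat[OF P(1)] le_SucI order_refl)
  moreover have "vec k (\<lambda>i. F $$ (i,k)) = u" "vec k (\<lambda>i. F $$ (i, Suc k)) = w"
    using P(1) w by (auto simp: F_def u_def border_mat_index intro!: eq_vecI)
  moreover have "F $$ (k,k) = P $$ (k,k)" "F $$ (Suc k, Suc k) = d" "F $$ (k, Suc k) = y"
    using P(1) by (simp_all add: F_def border_mat_index)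
  moreover have "det (border_mat D w d) = det D * d - w \<bullet> (adj_mat D *\<^sub>v w)"
    using det_border_mat[OF _ w g] by (simp add: D_def)
  ultimately show ?thesis
    using det_sym_mat_Suc_Suc[OF F] det_sym_mat_Suc[OF P] g unfolding F_def D_def u_def by simp
qed

text \<open>The new last index duplicates the old one, except that the entry joining the two is \<open>t\<close>.\<close>

definition twin_border :: "'a::zero mat \<Rightarrow> 'a \<Rightarrow> 'a mat" where
  "twin_border P t = (let k = dim_row P - 1 in
     border_mat P (vec (dim_row P) (\<lambda>i. if i = k then t else P $$ (i,k))) (P $$ (k,k)))"

lemma twin_border_eq:
  assumes "P \<in> carrier_mat (Suc k) (Suc k)"
  shows "twin_border P t = border_mat P (vec (Suc k) (\<lambda>i. if i = k then t else P $$ (i,k))) (P $$ (k,k))"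
  using assms by (simp add: twin_border_def)

lemma det_twin_border:
  fixes P :: "'a::idom mat"
  assumes P: "P \<in> carrier_mat (Suc k) (Suc k)" "P\<^sup>T = P" and g: "det (lead_sub k P) \<noteq> 0"
  shows "det (twin_border P t) = (P $$ (k,k) - t) * (2 * det P - (P $$ (k,k) - t) * det (lead_sub k P))"
proof -
  define D where "D = lead_sub k P"
  define u where "u = vec k (\<lambda>i. P $$ (i,k))"
  have "twin_border P t = border_mat P (vec (Suc k) (\<lambda>i. if i = k then t else u $ i)) (P $$ (k,k))"
    unfolding twin_border_eq[OF P(1)] u_def by (intro arg_cong2[where f = "\<lambda>v d. border_mat P v d"]) auto
  then have "det (twin_border P t) * det D = det P * det P - (det D * t - u \<bullet> (adj_mat D *\<^sub>v u))\<^sup>2"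
    using det_border_mat_last_pair[OF P, of u t "P $$ (k,k)"] sym_mat_eq_border_mat[OF P] g
    by (simp add: D_def u_def)
  also have "u \<bullet> (adj_mat D *\<^sub>v u) = det D * P $$ (k,k) - det P"
    using det_sym_mat_Suc[OF P g] by (simp add: D_def u_def)
  finally have "det D * det (twin_border P t) = det D * ((P $$ (k,k) - t) * (2 * det P - (P $$ (k,k) - t) * det D))"
    by (simp add: power2_eq_square algebra_simps)
  then show ?thesis using g by (simp add: D_def)
qed

section \<open>Positive definite matrices\<close>

lemma quadratic_form_sum:
  fixes A :: "'a :: comm_ring_1 mat"
  assumes A: "A \<in> carrier_mat s s" and x: "x \<in> carrier_vec s"
  shows "x \<bullet> (A *\<^sub>v x) = (\<Sum>i<s. \<Sum>j<s. x $ i * A $$ (i,j) * x $ j)"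
proof -
  have "x \<bullet> (A *\<^sub>v x) = (\<Sum>i<s. x $ i * (\<Sum>j<s. A $$ (i,j) * x $ j))"
    using A x by (auto simp: scalar_prod_def lessThan_atLeast0 intro!: sum.cong)
  then show ?thesis by (simp add: sum_distrib_left mult.assoc)
qed

lemma nonzero_vec_index:
  assumes "x \<in> carrier_vec s" "x \<noteq> 0\<^sub>v s"
  obtains i where "i < s" "x $ i \<noteq> 0"
  using assms by (metis carrier_vecD eq_vecI index_zero_vec)

lemma pos_def_real_lead_sub:
  assumes E: "E \<in> carrier_mat s s" and pd: "pos_def_real E" and k: "k \<le> s"
  shows "pos_def_real (lead_sub k E)"
  unfolding pos_def_real_def
proof (intro ballI impI)
  fix y :: "real vec"
  assume "y \<in> carrier_vec (dim_row (lead_sub k E))" "y \<noteq> 0\<^sub>v (dim_row (lead_sub k E))"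
  then have y: "y \<in> carrier_vec k" "y \<noteq> 0\<^sub>v k" by simp_all
  define x where "x = vec s (\<lambda>i. if i < k then y $ i else 0)"
  have x: "x \<in> carrier_vec s" unfolding x_def by simp
  obtain i where "i < k" "y $ i \<noteq> 0" using nonzero_vec_index[OF y] .
  then have "x \<noteq> 0\<^sub>v s" using k by (auto simp: x_def dest!: arg_cong[where f = "\<lambda>v. v $ i"])
  then have "0 < x \<bullet> (E *\<^sub>v x)" using pd E x unfolding pos_def_real_def by auto
  also have "x \<bullet> (E *\<^sub>v x) = (\<Sum>i<k. \<Sum>j<k. y $ i * E $$ (i,j) * y $ j)"
    unfolding quadratic_form_sum[OF E x] using k
    by (intro sum.mono_neutral_cong_right) (auto simp: x_def intro!: sum.mono_neutral_cong_right)
  also have "\<dots> = y \<bullet> (lead_sub k E *\<^sub>v y)"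
    by (simp add: quadratic_form_sum[OF lead_sub_carrier y(1)])
  finally show "0 < y \<bullet> (lead_sub k E *\<^sub>v y)" .
qed

lemma pos_def_real_off_diag:
  assumes E: "E \<in> carrier_mat s s" and pd: "pos_def_real E"
    and ab: "a < s" "b < s" "a \<noteq> b"
  shows "\<bar>E $$ (a,b) + E $$ (b,a)\<bar> < E $$ (a,a) + E $$ (b,b)"
proof -
  have "0 < E $$ (a,a) + \<sigma> * (E $$ (a,b) + E $$ (b,a)) + E $$ (b,b)" if "\<sigma> = 1 \<or> \<sigma> = -1" for \<sigma>
  proof -
    define x where "x = vec s (\<lambda>i. if i = a then 1 else if i = b then \<sigma> else 0)"
    have x: "x \<in> carrier_vec s" "x \<noteq> 0\<^sub>v s"
      using ab by (auto simp: x_def dest!: arg_cong[where f = "\<lambda>v. v $ a"])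
    have supp: "{..<s} = insert a (insert b ({..<s} - {a, b}))" using ab by auto
    have "x \<bullet> (E *\<^sub>v x) = E $$ (a,a) + \<sigma> * (E $$ (a,b) + E $$ (b,a)) + \<sigma>\<^sup>2 * E $$ (b,b)"
      unfolding quadratic_form_sum[OF E x(1)] using ab
      by (subst (1 2) supp, simp add: x_def sum.insert power2_eq_square algebra_simps)
    then show ?thesis using pd E x that unfolding pos_def_real_def by auto
  qed
  from this[of 1] this[of "-1"] show ?thesis by (simp add: abs_less_iff)
qed

lemma border_mat_quadratic_form:
  fixes P :: "'a::comm_ring_1 mat"
  assumes P: "P \<in> carrier_mat k k" and b: "b \<in> carrier_vec k" and y: "y \<in> carrier_vec k"
  shows "(y @\<^sub>v vec 1 (\<lambda>_. t)) \<bullet> (border_mat P b d *\<^sub>v (y @\<^sub>v vec 1 (\<lambda>_. t)))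
    = y \<bullet> (P *\<^sub>v y) + 2 * t * (b \<bullet> y) + d * t\<^sup>2"
proof -
  have "border_mat P b d *\<^sub>v (y @\<^sub>v vec 1 (\<lambda>_. t))
      = (P *\<^sub>v y + t \<cdot>\<^sub>v b) @\<^sub>v vec 1 (\<lambda>_. b \<bullet> y + d * t)"
    unfolding border_mat_def using P b y
    by (subst four_block_mat_mult_vec[OF P _ _ _ y, of _ 1])
      (auto simp: scalar_prod_def mult.commute intro!: arg_cong2[where f = append_vec] eq_vecI)
  moreover have "y \<bullet> (P *\<^sub>v y + t \<cdot>\<^sub>v b) = y \<bullet> (P *\<^sub>v y) + t * (b \<bullet> y)"
    using P b y by (simp add: scalar_prod_add_distrib[of _ k] comm_scalar_prod[of y k b])
  ultimately show ?thesis using P b y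
    by (simp add: scalar_prod_append[of _ k _ 1] scalar_prod_def power2_eq_square algebra_simps)
qed

lemma border_mat_quadratic_form_square:
  fixes P :: "'a::field mat" and t :: 'a
  assumes P: "P \<in> carrier_mat k k" "P\<^sup>T = P" and g: "det P \<noteq> 0"
    and b: "b \<in> carrier_vec k" and y: "y \<in> carrier_vec k"
  defines "z \<equiv> det P \<cdot>\<^sub>v y + t \<cdot>\<^sub>v (adj_mat P *\<^sub>v b)"
  shows "(det P)\<^sup>2 * ((y @\<^sub>v vec 1 (\<lambda>_. t)) \<bullet> (border_mat P b d *\<^sub>v (y @\<^sub>v vec 1 (\<lambda>_. t))))
     = z \<bullet> (P *\<^sub>v z) + det P * t\<^sup>2 * det (border_mat P b d)"
proof -
  define a where "a = adj_mat P *\<^sub>v b"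
  have A: "adj_mat P \<in> carrier_mat k k" and PA: "P * adj_mat P = det P \<cdot>\<^sub>m 1\<^sub>m k"
    using adj_mat[OF P(1)] by auto
  have a: "a \<in> carrier_vec k" unfolding a_def using A b by auto
  have Pa: "P *\<^sub>v a = det P \<cdot>\<^sub>v b"
  proof -
    have "P *\<^sub>v a = (P * adj_mat P) *\<^sub>v b" unfolding a_def using P A b by (simp add: assoc_mult_mat_vec)
    then show ?thesis unfolding PA using b by auto
  qed
  have Py: "P *\<^sub>v y \<in> carrier_vec k" using P y by auto
  have aPy: "a \<bullet> (P *\<^sub>v y) = det P * (b \<bullet> y)"
    using transpose_vec_mult_scalar[OF P(1) y a] P Pa b y by (simp add: smult_scalar_prod_distrib[of _ k])
  have Pz: "P *\<^sub>v z = det P \<cdot>\<^sub>v (P *\<^sub>v y) + (t * det P) \<cdot>\<^sub>v b"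
    unfolding z_def a_def[symmetric] using P y a
    by (simp add: mult_add_distrib_mat_vec[OF P(1)] mult_mat_vec[OF P(1) y] mult_mat_vec[OF P(1) a]
        Pa smult_smult_assoc)
  have "z \<bullet> (P *\<^sub>v z)
      = (det P)\<^sup>2 * (y \<bullet> (P *\<^sub>v y)) + 2 * (det P)\<^sup>2 * t * (b \<bullet> y) + det P * t\<^sup>2 * (b \<bullet> a)"
    unfolding Pz unfolding z_def a_def[symmetric] using y a b Py
    by (simp add: add_scalar_prod_distrib[of _ k] scalar_prod_add_distrib[of _ k]
        smult_scalar_prod_distrib[of _ k] scalar_prod_smult_distrib[of _ k] aPy
        comm_scalar_prod[of y k b] comm_scalar_prod[of a k b] power2_eq_square algebra_simps)
  then show ?thesis
    unfolding border_mat_quadratic_form[OF P(1) b y] det_border_mat[OF P(1) b g] a_def[symmetric]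
    by (simp add: power2_eq_square algebra_simps)
qed

lemma vec_first_append_last:
  assumes "x \<in> carrier_vec (Suc k)"
  shows "x = vec_first x k @\<^sub>v vec 1 (\<lambda>_. x $ k)"
  using assms by (intro eq_vecI) (auto simp: vec_first_def less_Suc_eq)

lemma det_pos_if_pos_def_border_mat:
  fixes P :: "real mat"
  assumes P: "P \<in> carrier_mat k k" "P\<^sup>T = P" and g: "det P > 0" and b: "b \<in> carrier_vec k"
    and pd: "pos_def_real (border_mat P b d)"
  shows "det (border_mat P b d) > 0"
proof -
  define y where "y = (- 1 / det P) \<cdot>\<^sub>v (adj_mat P *\<^sub>v b)"
  have y: "y \<in> carrier_vec k" unfolding y_def using adj_mat(1)[OF P(1)] b by simp
  have z: "det P \<cdot>\<^sub>v y + 1 \<cdot>\<^sub>v (adj_mat P *\<^sub>v b) = 0\<^sub>v k"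
    unfolding y_def using adj_mat(1)[OF P(1)] b g by (intro eq_vecI) auto
  define x where "x = y @\<^sub>v vec 1 (\<lambda>_. 1::real)"
  have x: "x \<in> carrier_vec (Suc k)" unfolding x_def using y by (intro carrier_vecI) simp
  have "x $ k = 1" unfolding x_def using y by simp
  then have "x \<noteq> 0\<^sub>v (Suc k)" by auto
  then have "0 < x \<bullet> (border_mat P b d *\<^sub>v x)"
    using pd x border_mat_carrier[OF P(1), of b d] unfolding pos_def_real_def by auto
  moreover have "(det P)\<^sup>2 * (x \<bullet> (border_mat P b d *\<^sub>v x)) = det P * det (border_mat P b d)"
    using border_mat_quadratic_form_square[OF P _ b y, of 1 d] g P(1) unfolding x_def z by simp
  ultimately show ?thesis using g by (simp add: power2_eq_square) (metis mult_pos_pos)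
qed

lemma pos_def_real_det_pos:
  fixes E :: "real mat"
  assumes "E \<in> carrier_mat s s" "E\<^sup>T = E" "pos_def_real E"
  shows "det E > 0"
  using assms
proof (induction s arbitrary: E)
  case (Suc k)
  let ?P = "lead_sub k E" and ?b = "vec k (\<lambda>i. E $$ (i,k))"
  have P: "?P\<^sup>T = ?P" "pos_def_real ?P"
    using Suc.prems pos_def_real_lead_sub[of E "Suc k" k] by (simp_all add: transpose_lead_sub)
  then have "det ?P > 0" using Suc.IH by simp
  moreover have "border_mat ?P ?b (E $$ (k,k)) = E" using Suc.prems by (intro sym_mat_eq_border_mat)
  ultimately show ?case
    using det_pos_if_pos_def_border_mat[OF lead_sub_carrier P(1) _ vec_carrier] Suc.prems(3) by metis
qed simp

lemma pos_def_border_mat_if_det_pos: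
  fixes P :: "real mat"
  assumes P: "P \<in> carrier_mat k k" "P\<^sup>T = P" and pd: "pos_def_real P"
    and b: "b \<in> carrier_vec k" and dB: "det (border_mat P b d) > 0"
  shows "pos_def_real (border_mat P b d)"
  unfolding pos_def_real_def
proof (intro ballI impI)
  fix x :: "real vec"
  assume "x \<in> carrier_vec (dim_row (border_mat P b d))" "x \<noteq> 0\<^sub>v (dim_row (border_mat P b d))"
  then have x: "x \<in> carrier_vec (Suc k)" "x \<noteq> 0\<^sub>v (Suc k)"
    using border_mat_carrier[OF P(1), of b d] by auto
  define y where "y = vec_first x k"
  define t where "t = x $ k"
  define z where "z = det P \<cdot>\<^sub>v y + t \<cdot>\<^sub>v (adj_mat P *\<^sub>v b)"
  have xy: "x = y @\<^sub>v vec 1 (\<lambda>_. t)" and y: "y \<in> carrier_vec k"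
    using vec_first_append_last[OF x(1)] unfolding y_def t_def by auto
  have z: "z \<in> carrier_vec k" unfolding z_def using y adj_mat(1)[OF P(1)] b by auto
  have g: "det P > 0" using pos_def_real_det_pos[OF P pd] .
  have "0 < z \<bullet> (P *\<^sub>v z) + det P * t\<^sup>2 * det (border_mat P b d)"
  proof (cases "t = 0")
    case True
    have "y \<noteq> 0\<^sub>v k"
    proof
      assume "y = 0\<^sub>v k"
      then have "x = 0\<^sub>v (Suc k)" unfolding xy True by (intro eq_vecI) auto
      with x show False by simp
    qed
    then obtain i where "i < k" "y $ i \<noteq> 0" using nonzero_vec_index[OF y] by blast
    then have "z \<noteq> 0\<^sub>v k"
      using True g y adj_mat(1)[OF P(1)] b by (auto simp: z_def dest!: arg_cong[where f = "\<lambda>v. v $ i"])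
    then show ?thesis using True pd P(1) z unfolding pos_def_real_def by auto
  next
    case False
    have "0 \<le> z \<bullet> (P *\<^sub>v z)"
      using pd P(1) z by (cases "z = 0\<^sub>v k") (auto simp: pos_def_real_def less_imp_le)
    moreover have "0 < det P * t\<^sup>2 * det (border_mat P b d)" using False g dB by simp
    ultimately show ?thesis by simp
  qed
  also have "\<dots> = (det P)\<^sup>2 * (x \<bullet> (border_mat P b d *\<^sub>v x))"
    unfolding xy z_def by (rule border_mat_quadratic_form_square[OF P _ b y, symmetric]) (use g in simp)
  finally show "x \<bullet> (border_mat P b d *\<^sub>v x) > 0" using g by (simp add: zero_less_mult_iff)
qed

section \<open>Symmetric permutations\<close>

definition sym_permute_mat :: "(nat \<Rightarrow> nat) \<Rightarrow> 'a mat \<Rightarrow> 'a mat" where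
  "sym_permute_mat p A = mat (dim_row A) (dim_col A) (\<lambda>(i,j). A $$ (p i, p j))"

lemma sym_permute_mat_carrier: "A \<in> carrier_mat s s \<Longrightarrow> sym_permute_mat p A \<in> carrier_mat s s"
  and sym_permute_mat_index:
    "A \<in> carrier_mat s s \<Longrightarrow> i < s \<Longrightarrow> j < s
      \<Longrightarrow> sym_permute_mat p A $$ (i,j) = A $$ (p i, p j)"
  unfolding sym_permute_mat_def by auto

lemma det_sym_permute_mat:
  assumes A: "A \<in> carrier_mat s s" and p: "p permutes {0..<s}"
  shows "det (sym_permute_mat p A) = det A"
proof -
  define R where "R = mat s s (\<lambda>(i,j). A $$ (p i, j))"
  have R: "R \<in> carrier_mat s s" unfolding R_def by simp
  have "sym_permute_mat p A = (mat s s (\<lambda>(i,j). R\<^sup>T $$ (p i, j)))\<^sup>T"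
    using A permutes_in_image[OF p] by (intro eq_matI) (auto simp: sym_permute_mat_def R_def)
  then have "det (sym_permute_mat p A) = signof p * det R\<^sup>T"
    using det_permute_rows[of "R\<^sup>T" s p] R p
    by (simp add: det_transpose[of _ s])
  also have "\<dots> = signof p * signof p * det A"
    using det_permute_rows[OF A p] det_transpose[OF R] by (simp add: R_def)
  finally show ?thesis by (simp flip: of_int_mult)
qed

lemma quadratic_form_sym_permute_mat:
  fixes A :: "'a :: comm_ring_1 mat"
  assumes A: "A \<in> carrier_mat s s" and p: "p permutes {0..<s}" and x: "x \<in> carrier_vec s"
  shows "x \<bullet> (sym_permute_mat p A *\<^sub>v x)
    = vec s (\<lambda>i. x $ Hilbert_Choice.inv p i) \<bullet> (A *\<^sub>v vec s (\<lambda>i. x $ Hilbert_Choice.inv p i))"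
proof -
  let ?y = "vec s (\<lambda>i. x $ Hilbert_Choice.inv p i)"
  define f where "f i j = ?y $ i * A $$ (i,j) * ?y $ j" for i j
  have reindex: "(\<Sum>i<s. g (p i)) = (\<Sum>i<s. g i)" for g :: "nat \<Rightarrow> 'a"
    using sum.reindex_bij_betw[OF permutes_imp_bij[OF p]] by (simp add: atLeast0LessThan)
  have "?y $ p i = x $ i" if "i < s" for i
    using that permutes_in_image[OF p] permutes_inverses(2)[OF p] by simp
  then have "x \<bullet> (sym_permute_mat p A *\<^sub>v x) = (\<Sum>i<s. \<Sum>j<s. f (p i) (p j))"
    using A x by (simp add: quadratic_form_sum[OF sym_permute_mat_carrier] sym_permute_mat_index f_def)
  also have "\<dots> = (\<Sum>i<s. \<Sum>j<s. f (p i) j)" by (rule sum.cong[OF refl]) (rule reindex)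
  also have "\<dots> = (\<Sum>i<s. \<Sum>j<s. f i j)" by (rule reindex[of "\<lambda>i. \<Sum>j<s. f i j"])
  also have "\<dots> = ?y \<bullet> (A *\<^sub>v ?y)" unfolding f_def by (rule quadratic_form_sum[OF A vec_carrier, symmetric])
  finally show ?thesis .
qed

lemma pos_def_real_sym_permute_mat:
  assumes A: "A \<in> carrier_mat s s" and p: "p permutes {0..<s}" and pd: "pos_def_real A"
  shows "pos_def_real (sym_permute_mat p A)"
  unfolding pos_def_real_def
proof (intro ballI impI)
  fix x :: "real vec"
  assume "x \<in> carrier_vec (dim_row (sym_permute_mat p A))" "x \<noteq> 0\<^sub>v (dim_row (sym_permute_mat p A))"
  then have x: "x \<in> carrier_vec s" "x \<noteq> 0\<^sub>v s" using sym_permute_mat_carrier[OF A, of p] by auto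
  obtain i where i: "i < s" "x $ i \<noteq> 0" using nonzero_vec_index[OF x] .
  have "vec s (\<lambda>i. x $ Hilbert_Choice.inv p i) \<noteq> 0\<^sub>v s"
    using i permutes_in_image[OF p] permutes_inverses(2)[OF p]
    by (auto dest!: arg_cong[where f = "\<lambda>v. v $ p i"])
  then show "0 < x \<bullet> (sym_permute_mat p A *\<^sub>v x)"
    using pd A unfolding quadratic_form_sym_permute_mat[OF A p x(1)] pos_def_real_def by auto
qed

lemma permutation_onto_last_pair:
  assumes "r \<le> i" "i < Suc (Suc k)" "r \<le> j" "j < Suc (Suc k)" "i \<noteq> j"
  obtains p where "p permutes {0..<Suc (Suc k)}" "\<forall>a<r. p a = a" "p k = i" "p (Suc k) = j"
proof
  define q where "q = Transposition.transpose j (Suc k)"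
  define p where "p = q \<circ> Transposition.transpose k (q i)"
  have qi: "q i < Suc (Suc k)" "q i \<noteq> Suc k" "r \<le> q i" "q (q i) = i"
    using assms by (auto simp: q_def transpose_def)
  have "q permutes {0..<Suc (Suc k)}" unfolding q_def using assms by (intro permutes_swap_id) auto
  moreover have "Transposition.transpose k (q i) permutes {0..<Suc (Suc k)}"
    using qi by (intro permutes_swap_id) auto
  ultimately show "p permutes {0..<Suc (Suc k)}" unfolding p_def by (rule permutes_compose[rotated])
  show "\<forall>a<r. p a = a"
    using assms qi by (auto simp: p_def q_def transpose_def)
  show "p k = i" using qi by (simp add: p_def)
  show "p (Suc k) = j" using qi by (auto simp: p_def q_def transpose_def)
qed

section \<open>The classes \<open>frakE\<close>\<close>

abbreviation of_int_mat :: "int mat \<Rightarrow> real mat" where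
  "of_int_mat A \<equiv> map_mat real_of_int A"

lemma pos_def_int_det_pos:
  assumes "E \<in> carrier_mat s s" "E\<^sup>T = E" "pos_def_real (of_int_mat E)"
  shows "det E > 0"
proof -
  have "(of_int_mat E)\<^sup>T = of_int_mat E" using assms(2) by (metis map_mat_transpose)
  then have "det (of_int_mat E) > 0" using pos_def_real_det_pos[of "of_int_mat E" s] assms by simp
  then show ?thesis by (simp add: of_int_hom.hom_det)
qed

lemma frakE_iff: "E \<in> frakE n M s \<longleftrightarrow> E \<in> carrier_mat s s \<and> E\<^sup>T = E
   \<and> pos_def_real (of_int_mat E) \<and> (\<forall>i<s. E $$ (i,i) = n)
   \<and> (\<forall>i<s. \<forall>j<s. [E $$ (i,j) = n] (mod 4)) \<and> lead_sub (dim_row M) E = M"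
  unfolding frakE_def frakC_def by auto

lemma frakE_det_pos: "E \<in> frakE n M s \<Longrightarrow> det E > 0"
  using pos_def_int_det_pos unfolding frakE_iff by blast

lemma pos_def_int_lead_sub:
  assumes E: "E \<in> carrier_mat s s" "pos_def_real (of_int_mat E)" and k: "k \<le> s"
  shows "pos_def_real (of_int_mat (lead_sub k E))"
proof -
  have "of_int_mat (lead_sub k E) = lead_sub k (of_int_mat E)" using E k by (intro eq_matI) auto
  then show ?thesis using pos_def_real_lead_sub[of "of_int_mat E" s k] E k by simp
qed

lemma frakE_det_lead_sub_pos:
  assumes "E \<in> frakE n M s" "k \<le> s"
  shows "det (lead_sub k E) > 0"
  using assms pos_def_int_lead_sub[of E s k]
  by (intro pos_def_int_det_pos[of _ k]) (auto simp: frakE_iff transpose_lead_sub)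

lemma frakE_lead_sub:
  assumes E: "E \<in> frakE n M s" and k: "dim_row M \<le> k" "k \<le> s"
  shows "lead_sub k E \<in> frakE n M k"
proof -
  have "lead_sub (dim_row M) (lead_sub k E) = M"
    using lead_sub_lead_sub[OF k(1), of E] E by (simp add: frakE_iff)
  then show ?thesis using E k pos_def_int_lead_sub[of E s k] by (auto simp: frakE_iff transpose_lead_sub)
qed

lemma frakE_sym_permute_mat:
  assumes E: "E \<in> frakE n M s" and p: "p permutes {0..<s}" and fix_M: "\<forall>i<dim_row M. p i = i"
    and M: "dim_row M \<le> s"
  shows "sym_permute_mat p E \<in> frakE n M s"
proof -
  have C: "E \<in> carrier_mat s s" using E by (simp add: frakE_iff)
  have ps: "p i < s" if "i < s" for i using permutes_in_image[OF p] that by simp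
  have "E $$ (i,j) = E $$ (j,i)" if "i < s" "j < s" for i j
    using E C that by (metis carrier_matD frakE_iff index_transpose_mat(1))
  then have "(sym_permute_mat p E)\<^sup>T = sym_permute_mat p E"
    using C ps sym_permute_mat_carrier[OF C, of p]
    by (intro eq_matI) (auto simp: sym_permute_mat_index carrier_matD)
  moreover have "of_int_mat (sym_permute_mat p E) = sym_permute_mat p (of_int_mat E)"
    using C ps by (intro eq_matI) (auto simp: sym_permute_mat_def)
  then have "pos_def_real (of_int_mat (sym_permute_mat p E))"
    using pos_def_real_sym_permute_mat[of "of_int_mat E" s p] E C p by (simp add: frakE_iff)
  moreover have "lead_sub (dim_row M) (sym_permute_mat p E) = lead_sub (dim_row M) E"
    using C fix_M M by (intro eq_matI) (auto simp: sym_permute_mat_index)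
  ultimately show ?thesis
    using E ps C by (auto simp: frakE_iff sym_permute_mat_carrier sym_permute_mat_index)
qed

lemma pos_def_int_border_mat:
  assumes P: "P \<in> carrier_mat s s" "P\<^sup>T = P" "pos_def_real (of_int_mat P)"
    and v: "v \<in> carrier_vec s" and pos: "det (border_mat P v d) > 0"
  shows "pos_def_real (of_int_mat (border_mat P v d))"
proof -
  have "of_int_mat (border_mat P v d) = border_mat (of_int_mat P) (map_vec real_of_int v) (real_of_int d)"
    using P v by (intro eq_matI) (auto simp: border_mat_def)
  moreover have "(of_int_mat P)\<^sup>T = of_int_mat P" using P(2) by (metis map_mat_transpose)
  moreover have "det (of_int_mat (border_mat P v d)) > 0" using pos by (simp add: of_int_hom.hom_det)
  ultimately show ?thesis using pos_def_border_mat_if_det_pos[of "of_int_mat P" s] P v by simp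
qed

lemma frakE_border_mat:
  assumes P: "P \<in> frakE n M s" and M: "dim_row M \<le> s" and v: "v \<in> carrier_vec s"
    and cong: "\<forall>i<s. [v $ i = n] (mod 4)" and pos: "det (border_mat P v n) > 0"
  shows "border_mat P v n \<in> frakE n M (Suc s)"
proof -
  have C: "P \<in> carrier_mat s s" using P by (simp add: frakE_iff)
  have "pos_def_real (of_int_mat (border_mat P v n))"
    using P v pos by (intro pos_def_int_border_mat) (simp_all add: frakE_iff)
  moreover have "lead_sub (dim_row M) (border_mat P v n) = M"
    using P M lead_sub_lead_sub[OF M, of "border_mat P v n"] lead_sub_border_mat[OF C]
    by (simp add: frakE_iff)
  moreover have "[border_mat P v n $$ (i,j) = n] (mod 4)" if "i < Suc s" "j < Suc s" for i j
    using that P cong C by (auto simp: frakE_iff border_mat_index)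
  ultimately show ?thesis using P C border_mat_carrier[OF C] transpose_border_mat[OF C]
    by (auto simp: frakE_iff border_mat_index less_Suc_eq)
qed

lemma frakE_border_mat_entry_bound:
  assumes P: "P \<in> frakE n M s" and v: "v \<in> carrier_vec s" and i: "i < s"
    and pos: "det (border_mat P v n) > 0"
  shows "\<bar>v $ i\<bar> < n"
proof -
  have C: "P \<in> carrier_mat s s" using P by (simp add: frakE_iff)
  have "pos_def_real (of_int_mat (border_mat P v n))"
    using P v pos by (intro pos_def_int_border_mat) (simp_all add: frakE_iff)
  then have "\<bar>of_int_mat (border_mat P v n) $$ (i, s) + of_int_mat (border_mat P v n) $$ (s, i)\<bar>
      < of_int_mat (border_mat P v n) $$ (i, i) + of_int_mat (border_mat P v n) $$ (s, s)"
    using i border_mat_carrier[OF C, of v n] by (intro pos_def_real_off_diag[of _ "Suc s"]) auto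
  then show ?thesis using P C i border_mat_carrier[OF C, of v n] by (simp add: border_mat_index frakE_iff)
qed

section \<open>Integer arithmetic of the extremal entry\<close>

lemma det_gap_bound:
  fixes A B g n e :: int
  assumes g: "g > 0" and n: "n > 3" and B: "B > 0"
    and gapB: "(n - 3) * B < e" and gapA: "(n - 3) * (2 * A - (n - 3) * g) \<le> e"
    and e: "e * g \<le> A * B"
  shows "(n - 3)\<^sup>2 * g < e"
proof (rule ccontr)
  assume "\<not> ?thesis"
  then have "(n - 3) * (2 * A - (n - 3) * g) \<le> (n - 3) * ((n - 3) * g)"
    using gapA by (simp add: power2_eq_square algebra_simps)
  then have "A \<le> (n - 3) * g" using n by (simp add: mult_le_cancel_left mult.commute)
  then have "e * g \<le> (n - 3) * B * g" using e B mult_right_mono[of A "(n-3)*g" B] by (simp add: algebra_simps)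
  then have "e \<le> (n - 3) * B" using g by simp
  with gapB show False by simp
qed

lemma square_less_square_iff: "(x::int)\<^sup>2 < y\<^sup>2 \<longleftrightarrow> \<bar>x\<bar> < \<bar>y\<bar>"
  using abs_le_square_iff[of y x] by linarith

lemma vertex_upper_bound:
  fixes g n x c :: int
  assumes g: "g > 0" and x: "x < n"
    and less: "(g * x - c)\<^sup>2 + ((n - 3) * g)\<^sup>2 < (g * n - c)\<^sup>2"
  shows "c < 3 * g"
proof -
  have "\<bar>g * x - c\<bar> < \<bar>g * n - c\<bar>" "\<bar>(n - 3) * g\<bar> < \<bar>g * n - c\<bar>"
    using less zero_le_power2[of "g * x - c"] zero_le_power2[of "(n - 3) * g"]
    unfolding square_less_square_iff[symmetric] by linarith+
  moreover have "g * x < g * n" using g x by simp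
  ultimately have "(n - 3) * g < g * n - c" by linarith
  then show ?thesis by (simp add: algebra_simps)
qed

lemma closest_residue_mod_4:
  fixes g c x :: int
  assumes g: "g > 0" and c: "\<bar>c\<bar> < 3 * g" and x: "x mod 4 = 3"
    and min: "\<And>y. y mod 4 = 3 \<Longrightarrow> (g * x - c)\<^sup>2 \<le> (g * y - c)\<^sup>2"
  shows "x = -1 \<or> x = 3"
proof (rule ccontr)
  assume "\<not> (x = -1 \<or> x = 3)"
  then have "x \<ge> 7 \<or> x \<le> -5" using x by presburger
  moreover have "\<bar>g * (x - 4) - c\<bar> < \<bar>g * x - c\<bar>" if "x \<ge> 7"
  proof -
    have "g * 7 \<le> g * x" using g that by simp
    then show ?thesis using g c unfolding right_diff_distrib by arith
  qed
  moreover have "\<bar>g * (x + 4) - c\<bar> < \<bar>g * x - c\<bar>" if "x \<le> -5"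
  proof -
    have "g * x \<le> g * -5" using g that by (simp only: mult_le_cancel_left_pos)
    then show ?thesis using g c unfolding distrib_left by arith
  qed
  moreover have "(x - 4) mod 4 = 3" "(x + 4) mod 4 = 3" using x by presburger+
  ultimately show False
    using min[of "x - 4"] min[of "x + 4"] unfolding square_less_square_iff[symmetric] by fastforce
qed

text \<open>
  The final step in abstract form: \<open>f y\<close> stands for \<open>det E(y)\<close>, \<open>g\<close> for \<open>det D\<close>, and \<open>A\<close>, \<open>B\<close>
  for the two principal minors of order \<open>k + 1\<close> (notation of the header).
\<close>

lemma maximal_entry_mod_4:
  fixes n g A B c x :: int and f :: "int \<Rightarrow> int"
  assumes n: "n > 3" "[n = 3] (mod 4)" and g: "g > 0" and B: "B > 0"
    and f: "\<And>y. f y * g = A * B - (g * y - c)\<^sup>2"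
    and x: "[x = n] (mod 4)" "\<bar>x\<bar> < n"
    and gapB: "(n - 3) * B < f x" and gapA: "(n - 3) * (2 * A - (n - 3) * g) \<le> f x"
    and edge: "f n \<le> 0" "f (- n) \<le> 0"
    and max: "\<And>y. [y = n] (mod 4) \<Longrightarrow> f y \<le> f x"
  shows "x = -1 \<or> x = 3"
proof -
  have "(n - 3)\<^sup>2 * g < f x"
    using f[of x] by (intro det_gap_bound[OF g n(1) B gapB gapA]) simp
  then have "(n - 3)\<^sup>2 * g * g < f x * g" using g by simp
  then have big: "(g * x - c)\<^sup>2 + ((n - 3) * g)\<^sup>2 < A * B"
    using f[of x] by (simp add: power2_eq_square algebra_simps)
  have "f n * g \<le> 0" "f (- n) * g \<le> 0" using edge g by (simp_all add: mult_nonpos_nonneg)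
  then have "A * B \<le> (g * n - c)\<^sup>2" "A * B \<le> (g * n - - c)\<^sup>2"
    using f[of n] f[of "- n"] by (simp_all add: power2_eq_square algebra_simps)
  moreover have "(g * - x - - c)\<^sup>2 = (g * x - c)\<^sup>2" by (simp add: power2_eq_square algebra_simps)
  ultimately have "c < 3 * g" "- c < 3 * g"
    using big x(2) vertex_upper_bound[OF g, of x n c] vertex_upper_bound[OF g, of "- x" n "- c"]
    by linarith+
  then have "\<bar>c\<bar> < 3 * g" by simp
  moreover have "(g * x - c)\<^sup>2 \<le> (g * y - c)\<^sup>2" if "y mod 4 = 3" for y
  proof -
    have "f y * g \<le> f x * g" using max[of y] that n(2) g by (simp add: cong_def)
    then show ?thesis using f[of x] f[of y] by simp
  qed
  moreover have "x mod 4 = 3" using x(1) n(2) by (simp add: cong_def)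
  ultimately show ?thesis using closest_residue_mod_4[OF g] by blast
qed

section \<open>Maximal determinants\<close>

locale frakE_setting =
  fixes n :: int and r :: nat and M :: "int mat"
  assumes n_mod_4: "[n = 3] (mod 4)" and n_gt_3: "n > 3" and r_pos: "1 \<le> r"
    and M: "M \<in> frakC n r" and det_tilde_M: "det (tilde M) > 0"
begin

lemma dim_row_M: "dim_row M = r"
  using M unfolding frakC_def by auto

lemma frakE_at_r: "frakE n M r = {M}"
proof -
  have "M \<in> frakE n M r" using M lead_sub_self[of M r] dim_row_M by (simp add: frakE_def frakC_def)
  moreover have "G = M" if "G \<in> frakE n M r" for G
    using that lead_sub_self[of G r] dim_row_M by (simp add: frakE_iff)
  ultimately show ?thesis by blast
qed

lemma det_gap_M: "(n - 3) * det (lead_sub (r - 1) M) < det M"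
proof -
  obtain k where r: "r = Suc k" using r_pos by (cases r) auto
  have ME: "M \<in> frakE n M (Suc k)" using frakE_at_r r by simp
  then have C: "M \<in> carrier_mat (Suc k) (Suc k)" and T: "M\<^sup>T = M" and Mkk: "M $$ (k,k) = n"
    by (simp_all add: frakE_iff)
  define P where "P = lead_sub k M"
  define u where "u = vec k (\<lambda>i. M $$ (i,k))"
  have MP: "border_mat P u n = M"
    using sym_mat_eq_border_mat[OF C T] Mkk by (simp add: P_def u_def)
  have P: "P \<in> carrier_mat k k" by (simp add: P_def)
  have "tilde M $$ (i,j) = border_mat P u 3 $$ (i,j)" if "i < Suc k" "j < Suc k" for i j
    using that C border_mat_index[OF P that, of u n] border_mat_index[OF P that, of u 3]
    by (simp add: tilde_def MP)
  then have "tilde M = border_mat P u 3"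
    using C border_mat_carrier[OF P, of u 3] by (intro eq_matI) (auto simp: tilde_def carrier_matD)
  moreover have "det P \<noteq> 0" using frakE_det_lead_sub_pos[OF ME, of k] by (simp add: P_def)
  then have dB: "det (border_mat P u d) = det P * d - u \<bullet> (adj_mat P *\<^sub>v u)" for d
    using det_border_mat[OF P] by (simp add: u_def)
  moreover have "det M = det (border_mat P u n)" by (simp add: MP)
  ultimately have "det M - det (tilde M) = (n - 3) * det P"
    using dB[of n] dB[of 3] by (simp add: algebra_simps)
  then show ?thesis using det_tilde_M r by (simp add: P_def)
qed

lemma det_twin_border_frakE:
  assumes H: "H \<in> frakE n M (Suc k)"
  shows "det (twin_border H 3) = (n - 3) * (2 * det H - (n - 3) * det (lead_sub k H))"
  using det_twin_border[of H k 3] frakE_det_lead_sub_pos[OF H, of k] H by (simp add: frakE_iff)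

lemma frakE_twin_border:
  assumes H: "H \<in> frakE n M (Suc k)" "r \<le> Suc k" and pos: "det (twin_border H 3) > 0"
  shows "twin_border H 3 \<in> frakE n M (Suc (Suc k))"
proof -
  have "[3 = n] (mod 4)" using n_mod_4 by (rule cong_sym)
  then have "\<forall>i<Suc k. [vec (Suc k) (\<lambda>i. if i = k then 3 else H $$ (i,k)) $ i = n] (mod 4)"
    using H by (simp add: frakE_iff)
  then show ?thesis
    using frakE_border_mat[OF H(1)] H pos dim_row_M twin_border_eq[of H k 3]
    by (simp add: frakE_iff)
qed

lemma twin_border_gap:
  assumes H: "H \<in> frakE n M (Suc k)" "r \<le> Suc k" and gap: "(n - 3) * det (lead_sub k H) < det H"
  shows "twin_border H 3 \<in> frakE n M (Suc (Suc k))" "(n - 3) * det H < det (twin_border H 3)"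
proof -
  have "det (twin_border H 3) - (n - 3) * det H = (n - 3) * (det H - (n - 3) * det (lead_sub k H))"
    using det_twin_border_frakE[OF H(1)] by (simp add: algebra_simps)
  also have "\<dots> > 0" using gap n_gt_3 by simp
  finally show "(n - 3) * det H < det (twin_border H 3)" by simp
  moreover have "(n - 3) * det H > 0" using frakE_det_pos[OF H(1)] n_gt_3 by simp
  ultimately show "twin_border H 3 \<in> frakE n M (Suc (Suc k))" using frakE_twin_border[OF H] by simp
qed

lemma exists_dominating_gap:
  "r \<le> s \<Longrightarrow> G \<in> frakE n M s
    \<Longrightarrow> \<exists>H \<in> frakE n M s. det G \<le> det H \<and> (n - 3) * det (lead_sub (s - 1) H) < det H"
proof (induction s arbitrary: G rule: nat_induct_at_least)
  case base
  then show ?case using frakE_at_r det_gap_M by auto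
next
  case (Suc s)
  obtain k where s: "s = Suc k" using Suc.hyps r_pos by (cases s) auto
  have "lead_sub s G \<in> frakE n M s" using Suc dim_row_M by (intro frakE_lead_sub) auto
  then obtain H where H: "H \<in> frakE n M (Suc k)" "det (lead_sub s G) \<le> det H"
    and gap: "(n - 3) * det (lead_sub k H) < det H" using Suc.IH s by auto
  show ?case
  proof (cases "(n - 3) * det (lead_sub s G) < det G")
    case True
    then show ?thesis using Suc.prems by auto
  next
    case False
    note twin = twin_border_gap[OF H(1) _ gap]
    have "det G \<le> (n - 3) * det H"
      using False H(2) n_gt_3 mult_left_mono[OF H(2), of "n - 3"] by linarith
    also have "\<dots> < det (twin_border H 3)" using twin(2) Suc.hyps s by simp
    finally show ?thesis
      using twin Suc.hyps s lead_sub_border_mat[of H "Suc k"] twin_border_eq[of H k 3] H(1)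
      by (intro bexI[of _ "twin_border H 3"]) (auto simp: frakE_iff)
  qed
qed

lemma max_det_gap:
  assumes E: "E \<in> frakE n M (Suc t)" and t: "r \<le> t"
    and max: "\<forall>F \<in> frakE n M (Suc t). det F \<le> det E"
  shows "(n - 3) * det (lead_sub t E) < det E"
proof -
  obtain k where t_Suc: "t = Suc k" using t r_pos by (cases t) auto
  have "lead_sub t E \<in> frakE n M t" using E t dim_row_M by (intro frakE_lead_sub) auto
  then obtain H where H: "H \<in> frakE n M (Suc k)" "det (lead_sub t E) \<le> det H"
    and gap: "(n - 3) * det (lead_sub k H) < det H"
    using exists_dominating_gap[OF t] t_Suc by auto
  note twin = twin_border_gap[OF H(1) _ gap]
  have "(n - 3) * det (lead_sub t E) \<le> (n - 3) * det H" using H(2) n_gt_3 by simp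
  also have "\<dots> < det (twin_border H 3)" using twin(2) t t_Suc by simp
  also have "\<dots> \<le> det E" using max twin(1) t t_Suc by simp
  finally show ?thesis .
qed

lemma max_det_swap_gap:
  assumes E: "E \<in> frakE n M (Suc (Suc k))" and k: "r \<le> k"
    and max: "\<forall>F \<in> frakE n M (Suc (Suc k)). det F \<le> det E"
  defines "B \<equiv> det (border_mat (lead_sub k E) (vec k (\<lambda>i. E $$ (i, Suc k))) n)"
  shows "0 < B" "(n - 3) * B < det E"
proof -
  define \<tau> where "\<tau> = Transposition.transpose k (Suc k)"
  define E' where "E' = sym_permute_mat \<tau> E"
  have C: "E \<in> carrier_mat (Suc (Suc k)) (Suc (Suc k))" using E by (simp add: frakE_iff)
  have \<tau>: "\<tau> permutes {0..<Suc (Suc k)}" unfolding \<tau>_def by (intro permutes_swap_id) auto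
  have E': "E' \<in> frakE n M (Suc (Suc k))" unfolding E'_def
    using E \<tau> k dim_row_M by (intro frakE_sym_permute_mat) (auto simp: \<tau>_def)
  have "det E' = det E" unfolding E'_def by (rule det_sym_permute_mat[OF C \<tau>])
  then have max': "\<forall>F \<in> frakE n M (Suc (Suc k)). det F \<le> det E'" using max by simp
  have C': "E' \<in> carrier_mat (Suc (Suc k)) (Suc (Suc k))" "E'\<^sup>T = E'" using E' by (simp_all add: frakE_iff)
  have idx: "E' $$ (i,j) = E $$ (\<tau> i, \<tau> j)" if "i < Suc (Suc k)" "j < Suc (Suc k)" for i j
    using that C by (simp add: E'_def sym_permute_mat_index)
  have "lead_sub (Suc k) E' = border_mat (lead_sub k E') (vec k (\<lambda>i. E' $$ (i,k))) (E' $$ (k,k))"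
    using C' by (intro lead_sub_Suc_eq_border_mat) auto
  also have "lead_sub k E' = lead_sub k E" using idx by (intro eq_matI) (auto simp: \<tau>_def)
  also have "vec k (\<lambda>i. E' $$ (i,k)) = vec k (\<lambda>i. E $$ (i, Suc k))"
    using idx by (intro eq_vecI) (auto simp: \<tau>_def)
  also have "E' $$ (k,k) = n" using idx E by (simp add: \<tau>_def frakE_iff)
  finally have B: "B = det (lead_sub (Suc k) E')" by (simp add: B_def)
  show "0 < B" unfolding B using E' k dim_row_M by (intro frakE_det_pos[of _ n M "Suc k"] frakE_lead_sub) auto
  show "(n - 3) * B < det E" unfolding B \<open>det E' = det E\<close>[symmetric]
    using E' k max' by (intro max_det_gap) auto
qed

lemma max_det_ge_border_mat:
  assumes P: "P \<in> frakE n M s" "r \<le> s" and v: "v \<in> carrier_vec s" "\<forall>i<s. [v $ i = n] (mod 4)"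
    and E: "E \<in> frakE n M (Suc s)" and max: "\<forall>F \<in> frakE n M (Suc s). det F \<le> det E"
  shows "det (border_mat P v n) \<le> det E"
proof (cases "det (border_mat P v n) > 0")
  case True
  then have "border_mat P v n \<in> frakE n M (Suc s)" using P v dim_row_M by (intro frakE_border_mat) auto
  then show ?thesis using max by blast
qed (use frakE_det_pos[OF E] in simp)

lemma max_det_twin_gap:
  assumes E: "E \<in> frakE n M (Suc (Suc k))" and k: "r \<le> k"
    and max: "\<forall>F \<in> frakE n M (Suc (Suc k)). det F \<le> det E"
  shows "(n - 3) * (2 * det (lead_sub (Suc k) E) - (n - 3) * det (lead_sub k E)) \<le> det E"
proof -
  have P: "lead_sub (Suc k) E \<in> frakE n M (Suc k)" using E k dim_row_M by (intro frakE_lead_sub) auto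
  have "det (twin_border (lead_sub (Suc k) E) 3) \<le> det E"
  proof (cases "det (twin_border (lead_sub (Suc k) E) 3) > 0")
    case True
    then show ?thesis using P k max frakE_twin_border by auto
  qed (use frakE_det_pos[OF E] in simp)
  then show ?thesis using det_twin_border_frakE[OF P] lead_sub_lead_sub[of k "Suc k" E] by simp
qed

lemma max_det_last_pair:
  assumes E: "E \<in> frakE n M (Suc (Suc k))" and k: "r \<le> k"
    and max: "\<forall>F \<in> frakE n M (Suc (Suc k)). det F \<le> det E"
  shows "E $$ (k, Suc k) = -1 \<or> E $$ (k, Suc k) = 3"
proof -
  define P where "P = lead_sub (Suc k) E"
  define D where "D = lead_sub k E"
  define w where "w = vec k (\<lambda>i. E $$ (i, Suc k))"
  define c where "c = vec k (\<lambda>i. E $$ (i,k)) \<bullet> (adj_mat D *\<^sub>v w)"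
  \<comment> \<open>\<open>F y\<close> is \<open>E\<close> with the entries at \<open>(k, Suc k)\<close> and \<open>(Suc k, k)\<close> set to \<open>y\<close>\<close>
  define F where "F y = border_mat P (vec (Suc k) (\<lambda>i. if i = k then y else w $ i)) n" for y
  have C: "E \<in> carrier_mat (Suc (Suc k)) (Suc (Suc k))" "E\<^sup>T = E"
    and diag: "\<forall>i<Suc (Suc k). E $$ (i,i) = n"
    and cong: "\<forall>i<Suc (Suc k). \<forall>j<Suc (Suc k). [E $$ (i,j) = n] (mod 4)"
    using E by (simp_all add: frakE_iff)
  have P: "P \<in> frakE n M (Suc k)" unfolding P_def using E k dim_row_M by (intro frakE_lead_sub) auto
  then have PC: "P \<in> carrier_mat (Suc k) (Suc k)" "P\<^sup>T = P" by (simp_all add: frakE_iff)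
  have DP: "lead_sub k P = D" unfolding P_def D_def by (rule lead_sub_lead_sub) simp
  have g: "det D > 0" unfolding D_def using E by (rule frakE_det_lead_sub_pos) simp
  have w: "w \<in> carrier_vec k" by (simp add: w_def)
  have "vec (Suc k) (\<lambda>i. if i = k then E $$ (k, Suc k) else w $ i) = vec (Suc k) (\<lambda>i. E $$ (i, Suc k))"
    by (intro eq_vecI) (auto simp: w_def)
  then have FE: "F (E $$ (k, Suc k)) = E"
    using sym_mat_eq_border_mat[OF C] diag by (simp add: F_def P_def)
  have DJ: "det (F y) * det D = det P * det (border_mat D w n) - (det D * y - c)\<^sup>2" for y
  proof -
    have "vec k (\<lambda>i. P $$ (i,k)) = vec k (\<lambda>i. E $$ (i,k))" by (intro eq_vecI) (auto simp: P_def)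
    then show ?thesis using det_border_mat_last_pair[OF PC w, of y n] DP g by (simp add: F_def c_def)
  qed
  have Fmax: "det (F y) \<le> det E" if "[y = n] (mod 4)" for y
    unfolding F_def using P k that cong E max
    by (intro max_det_ge_border_mat) (auto simp: w_def)
  have edge: "det (F y) \<le> 0" if "y = n \<or> y = - n" for y
  proof (rule ccontr)
    assume "\<not> det (F y) \<le> 0"
    then have "\<bar>vec (Suc k) (\<lambda>i. if i = k then y else w $ i) $ k\<bar> < n"
      unfolding F_def by (intro frakE_border_mat_entry_bound[OF P vec_carrier]) auto
    then show False using that n_gt_3 by auto
  qed
  have "\<bar>vec (Suc k) (\<lambda>i. if i = k then E $$ (k, Suc k) else w $ i) $ k\<bar> < n"
    using frakE_det_pos[OF E] FE unfolding F_def by (intro frakE_border_mat_entry_bound[OF P vec_carrier]) auto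
  moreover have "[E $$ (k, Suc k) = n] (mod 4)" using cong by simp
  ultimately show ?thesis
    using max_det_swap_gap[OF E k max] max_det_twin_gap[OF E k max] Fmax edge[of n] edge[of "- n"]
    by (intro maximal_entry_mod_4[OF n_gt_3 n_mod_4 g _ DJ]) (simp_all add: FE P_def D_def w_def)
qed

end

theorem theorem8:
  fixes n :: int and r m :: nat and M Estar :: "int mat"
  assumes "[n = 3] (mod 4)" and "n > 3"
    and "1 \<le> r" and "r \<le> m"
    and "M \<in> frakC n r"
    and "det (tilde M) > 0"
    and "Estar \<in> frakE n M m"
    and "\<forall>E \<in> frakE n M m. det E \<le> det Estar"
  shows "\<forall>i j. r \<le> i \<and> i < m \<and> r \<le> j \<and> j < m \<and> i \<noteq> j
           \<longrightarrow> Estar $$ (i,j) \<in> {-1, 3}"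
proof (intro allI impI)
  fix i j assume ij: "r \<le> i \<and> i < m \<and> r \<le> j \<and> j < m \<and> i \<noteq> j"
  interpret frakE_setting n r M using assms by unfold_locales auto
  define k where "k = m - 2"
  have m: "m = Suc (Suc k)" and k: "r \<le> k" using ij unfolding k_def by auto
  obtain p where p: "p permutes {0..<m}" "\<forall>a<r. p a = a" "p k = i" "p (Suc k) = j"
    using permutation_onto_last_pair[of r i k j] ij m by auto
  have C: "Estar \<in> carrier_mat m m" using assms(7) by (simp add: frakE_iff)
  have "sym_permute_mat p Estar \<in> frakE n M m"
    using assms(4,7) p dim_row_M by (intro frakE_sym_permute_mat) auto
  moreover have "det (sym_permute_mat p Estar) = det Estar" by (rule det_sym_permute_mat[OF C p(1)])
  ultimately have "sym_permute_mat p Estar $$ (k, Suc k) = -1 \<or> sym_permute_mat p Estar $$ (k, Suc k) = 3"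
    using max_det_last_pair[of _ k] k assms(8) m by simp
  then show "Estar $$ (i,j) \<in> {-1, 3}" using C m p by (auto simp: sym_permute_mat_index)
qed

end
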